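(* Let $P$ be the non-symmetric operad of sets in which $P(n)$ is the set of all $n$-tuples $(f_1,\dots,f_n)$ of order-preserving continuous maps $f_i:[0,1)\to[0,1)$ such that whenever $i<j$ and $t_i,t_j\in[0,1)$ we have $f_i(t_i)<f_j(t_j)$; the identity is $\mathrm{id}_{[0,1)}\in P(1)$, and composition is $(f_1,\dots,f_n)\circ((f_1^1,\dots,f_1^{k_1}),\dots,(f_n^1,\dots,f_n^{k_n}))=(f_1f_1^1,\dots,f_1f_1^{k_1},\dots,f_nf_n^1,\dots,f_nf_n^{k_n})$. Then: (1) an element $g\in P(1)$ is constant (in the operadic sense below) if and only if the map $g:[0,1)\to[0,1)$ is constant; (2) an element $(f_1,\dots,f_n)\in P(n)$ is surjective (in the operadic sense below) if and only if the union of the images of $f_1,\dots,f_n$ is $[0,1)$. Moreover both statements remain true when $P$ is replaced by its reverse $\overline{P}$.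
   Context: For a non-symmetric operad of sets $Q$ (sets $Q(n)$, identity $\mathrm{id}\in Q(1)$, composition $\theta\circ(\theta_1,\dots,\theta_n)$): an element $\gamma\in Q(1)$ is called constant if for all $n\in\mathbb{N}$ and all $\phi,\phi'\in Q(n)$, $\gamma\circ(\phi)=\gamma\circ(\phi')$; an element $\phi\in Q(n)$ is called surjective if for all $\theta,\theta'\in Q(1)$, $\theta\circ(\phi)=\theta'\circ(\phi)$ implies $\theta=\theta'$. The reverse $\overline{Q}$ of $Q$ has $\overline{Q}(n)=Q(n)$, the same identity, and composition $\theta\circ_{\mathrm{rev}}(\theta_1,\dots,\theta_n)=\theta\circ(\theta_n,\dots,\theta_1)$. An element $(g)\in P(1)$ is written simply $g$. *)

theory Defs
  imports "HOL-Analysis.Analysis"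
begin

text \<open>A non-symmetric operad of sets is represented by its carrier family
  Q :: nat => 'a set and its composition comp theta [theta_1, ..., theta_n].
  Elements of Q(1) are composed with a single-element list.\<close>

definition op_constant :: "(nat \<Rightarrow> 'a set) \<Rightarrow> ('a \<Rightarrow> 'a list \<Rightarrow> 'a) \<Rightarrow> 'a \<Rightarrow> bool" where
  "op_constant Q cmp \<gamma> \<longleftrightarrow>
     (\<forall>n::nat. \<forall>\<phi>\<in>Q n. \<forall>\<phi>'\<in>Q n. cmp \<gamma> [\<phi>] = cmp \<gamma> [\<phi>'])"

definition op_surjective :: "(nat \<Rightarrow> 'a set) \<Rightarrow> ('a \<Rightarrow> 'a list \<Rightarrow> 'a) \<Rightarrow> 'a \<Rightarrow> bool" where
  "op_surjective Q cmp \<phi> \<longleftrightarrow>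
     (\<forall>\<theta>\<in>Q 1. \<forall>\<theta>'\<in>Q 1. cmp \<theta> [\<phi>] = cmp \<theta>' [\<phi>] \<longrightarrow> \<theta> = \<theta>')"

definition rev_comp :: "('a \<Rightarrow> 'a list \<Rightarrow> 'a) \<Rightarrow> 'a \<Rightarrow> 'a list \<Rightarrow> 'a" where
  "rev_comp cmp \<theta> \<theta>s = cmp \<theta> (rev \<theta>s)"

text \<open>A map [0,1) -> [0,1) is represented as a function real => real that is
  0 outside [0,1) (so that equality of maps is equality of functions).\<close>

definition I01 :: "real set" where "I01 = {0..<1}"

definition is_map01 :: "(real \<Rightarrow> real) \<Rightarrow> bool" where
  "is_map01 f \<longleftrightarrow> f ` I01 \<subseteq> I01 \<and> (\<forall>x. x \<notin> I01 \<longrightarrow> f x = 0)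
      \<and> mono_on I01 f \<and> continuous_on I01 f"

definition Pop :: "nat \<Rightarrow> (real \<Rightarrow> real) list set" where
  "Pop n = {fs. length fs = n \<and> (\<forall>f\<in>set fs. is_map01 f) \<and>
      (\<forall>i j. i < j \<and> j < n \<longrightarrow> (\<forall>s\<in>I01. \<forall>t\<in>I01. (fs ! i) s < (fs ! j) t))}"

definition comp01 :: "(real \<Rightarrow> real) \<Rightarrow> (real \<Rightarrow> real) \<Rightarrow> real \<Rightarrow> real" where
  "comp01 f g = (\<lambda>x. if x \<in> I01 then f (g x) else 0)"

definition Pcomp :: "(real \<Rightarrow> real) list \<Rightarrow> (real \<Rightarrow> real) list list \<Rightarrow> (real \<Rightarrow> real) list" where
  "Pcomp fs gss = concat (map (\<lambda>(f, gs). map (comp01 f) gs) (zip fs gss))"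

end

theory Submission
  imports Defs
begin

text \<open>Both notions only involve composition with a single argument, on which reversal acts
  trivially. In \<open>P(1)\<close> a map is determined by its values on \<open>[0,1)\<close>, and \<open>u \<circ> f\<^sub>i\<close> only sees \<open>u\<close>
  on the image of \<open>f\<^sub>i\<close>. Composing \<open>g\<close> with constant maps reads off every value of \<open>g\<close>, which
  gives (1). For (2), each image \<open>f\<^sub>i([0,1))\<close> is an interval starting at \<open>f\<^sub>i(0)\<close>, so if a point
  \<open>y\<close> is missed by all of them, a whole interval \<open>(y, m)\<close> is missed; the identity and a monotone
  map that differs from it only on \<open>(y, m)\<close> are then not separated by \<open>(f\<^sub>1,\<dots>,f\<^sub>n)\<close>.\<close>

lemma op_constant_rev_comp: "op_constant Q (rev_comp cmp) \<gamma> \<longleftrightarrow> op_constant Q cmp \<gamma>"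
  by (simp add: op_constant_def rev_comp_def)

lemma op_surjective_rev_comp: "op_surjective Q (rev_comp cmp) \<phi> \<longleftrightarrow> op_surjective Q cmp \<phi>"
  by (simp add: op_surjective_def rev_comp_def)

lemma zero_in_I01: "0 \<in> I01"
  by (simp add: I01_def)

lemma Pop_1_iff: "[g] \<in> Pop 1 \<longleftrightarrow> is_map01 g"
  by (auto simp: Pop_def)

lemma Pop_1_cases:
  assumes "\<theta> \<in> Pop 1"
  obtains g where "\<theta> = [g]" "is_map01 g"
  using assms by (cases \<theta>) (auto simp: Pop_def)

lemma ball_Pop_1: "(\<forall>\<theta>\<in>Pop 1. P \<theta>) \<longleftrightarrow> (\<forall>g. is_map01 g \<longrightarrow> P [g])"
  by (metis Pop_1_cases Pop_1_iff)

lemma Pcomp_unary: "Pcomp [g] [fs] = map (comp01 g) fs"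
  by (simp add: Pcomp_def)

lemma is_map01_mapsto: "is_map01 f \<Longrightarrow> t \<in> I01 \<Longrightarrow> f t \<in> I01"
  by (auto simp: is_map01_def)

lemma is_map01_eq_iff:
  assumes "is_map01 a" "is_map01 b"
  shows "a = b \<longleftrightarrow> (\<forall>x\<in>I01. a x = b x)"
  using assms unfolding is_map01_def fun_eq_iff by metis

lemma comp01_eq_iff: "comp01 a f = comp01 b f \<longleftrightarrow> (\<forall>x\<in>I01. a (f x) = b (f x))"
  by (auto simp: comp01_def fun_eq_iff)

lemma is_map01_restrict:
  assumes "h ` I01 \<subseteq> I01" "mono_on I01 h" "continuous_on I01 h"
  shows "is_map01 (\<lambda>x. if x \<in> I01 then h x else 0)"
proof -
  have "continuous_on I01 (\<lambda>x. if x \<in> I01 then h x else 0)"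
    using assms(3) by (rule continuous_on_cong[THEN iffD1, rotated 2]) auto
  moreover have "mono_on I01 (\<lambda>x. if x \<in> I01 then h x else 0)"
    using assms(2) by (auto simp: mono_on_def)
  ultimately show ?thesis
    using assms(1) by (auto simp: is_map01_def)
qed

definition const01 :: "real \<Rightarrow> real \<Rightarrow> real" where
  "const01 c = (\<lambda>x. if x \<in> I01 then c else 0)"

lemma is_map01_const01: "c \<in> I01 \<Longrightarrow> is_map01 (const01 c)"
  unfolding const01_def by (rule is_map01_restrict) (auto simp: mono_on_def)

lemma comp01_const01:
  assumes "\<forall>t\<in>I01. g t = c" "f ` I01 \<subseteq> I01"
  shows "comp01 g f = const01 c"
  using assms by (auto simp: comp01_def const01_def fun_eq_iff)

lemma op_constant_Pop_iff:
  assumes "is_map01 g"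
  shows "op_constant Pop Pcomp [g] \<longleftrightarrow> (\<exists>c. \<forall>t\<in>I01. g t = c)"
proof
  assume const: "op_constant Pop Pcomp [g]"
  have "g s = g 0" if s: "s \<in> I01" for s
  proof -
    have "[const01 s] \<in> Pop 1" "[const01 0] \<in> Pop 1"
      using s zero_in_I01 by (simp_all only: Pop_1_iff is_map01_const01)
    with const have "comp01 g (const01 s) = comp01 g (const01 0)"
      by (force simp: op_constant_def Pcomp_unary)
    then have "comp01 g (const01 s) 0 = comp01 g (const01 0) 0"
      by simp
    then show ?thesis
      using s zero_in_I01 by (simp add: comp01_def const01_def)
  qed
  then show "\<exists>c. \<forall>t\<in>I01. g t = c" by blast
next
  assume "\<exists>c. \<forall>t\<in>I01. g t = c"
  then obtain c where c: "\<forall>t\<in>I01. g t = c" by blast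
  have "Pcomp [g] [\<phi>] = replicate n (const01 c)" if "\<phi> \<in> Pop n" for n \<phi>
  proof -
    have "f ` I01 \<subseteq> I01" if "f \<in> set \<phi>" for f
      using \<open>\<phi> \<in> Pop n\<close> that by (auto simp: Pop_def is_map01_def)
    then show ?thesis
      using \<open>\<phi> \<in> Pop n\<close> c
      by (auto simp: Pcomp_unary Pop_def comp01_const01 map_replicate_const[symmetric]
          intro!: map_cong)
  qed
  then show "op_constant Pop Pcomp [g]"
    by (simp add: op_constant_def)
qed

lemma is_interval_1_less_if_notin:
  fixes S :: "real set"
  assumes "is_interval S" "a \<in> S" "b \<in> S" "a < y" "y \<notin> S"
  shows "b < y"
proof (rule ccontr)
  assume "\<not> b < y"
  have "y \<in> S"
    by (rule mem_is_interval_1_I[OF assms(1-3)]) (use \<open>a < y\<close> \<open>\<not> b < y\<close> in linarith)+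
  with \<open>y \<notin> S\<close> show False ..
qed

lemma is_map01_image_below_or_above:
  assumes f: "is_map01 f" and y: "y \<notin> f ` I01" and t: "t \<in> I01"
  shows "f t < y \<or> y < f 0 \<and> f 0 \<le> f t"
proof (cases "f 0 < y")
  case True
  have "continuous_on I01 f" "connected I01"
    using f by (simp_all add: is_map01_def I01_def is_interval_connected)
  then have "is_interval (f ` I01)"
    unfolding is_interval_connected_1 by (rule connected_continuous_image)
  then have "f t < y"
    by (rule is_interval_1_less_if_notin[of "f ` I01" "f 0" "f t" y]) (use True y t zero_in_I01 in auto)
  then show ?thesis ..
next
  case False
  have "f 0 \<le> f t"
    using f t zero_in_I01 by (auto simp: is_map01_def mono_on_def I01_def)
  moreover have "f 0 \<noteq> y"
    using y zero_in_I01 by blast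
  ultimately show ?thesis
    using False by auto
qed

lemma is_map01_images_gap:
  assumes "finite F" "\<forall>f\<in>F. is_map01 f" "y \<in> I01" "y \<notin> (\<Union>f\<in>F. f ` I01)"
  obtains m where "y < m" "m \<le> 1" "\<forall>f\<in>F. \<forall>t\<in>I01. f t \<notin> {y<..<m}"
proof
  define M where "M = insert 1 {f 0 | f. f \<in> F \<and> y < f 0}"
  have "finite M"
    using assms(1) by (simp add: M_def)
  then show "y < Min M" "Min M \<le> 1"
    using assms(3) by (auto simp: M_def I01_def)
  show "\<forall>f\<in>F. \<forall>t\<in>I01. f t \<notin> {y<..<Min M}"
  proof (intro ballI)
    fix f t assume "f \<in> F" "t \<in> I01"
    then have "f t < y \<or> y < f 0 \<and> f 0 \<le> f t"
      using assms(2,4) by (intro is_map01_image_below_or_above) auto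
    moreover have "y < f 0 \<Longrightarrow> Min M \<le> f 0"
      using \<open>finite M\<close> \<open>f \<in> F\<close> by (intro Min_le) (auto simp: M_def)
    ultimately show "f t \<notin> {y<..<Min M}"
      by auto
  qed
qed

lemma is_map01_differ_only_on:
  assumes "y \<in> I01" "y < m" "m \<le> 1"
  obtains a b where "is_map01 a" "is_map01 b" "a \<noteq> b" "\<forall>x\<in>I01 - {y<..<m}. a x = b x"
proof -
  define h where "h x = min x (max y (2 * x - m))" for x :: real
  define a where "a = (\<lambda>x. if x \<in> I01 then x else 0)"
  define b where "b = (\<lambda>x. if x \<in> I01 then h x else 0)"
  have "a ((y + m) / 2) \<noteq> b ((y + m) / 2)"
    using assms by (auto simp: a_def b_def I01_def h_def field_simps)
  then have "a \<noteq> b"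
    by metis
  moreover have "is_map01 a"
    unfolding a_def by (rule is_map01_restrict) (auto simp: mono_on_def intro: continuous_on_id)
  moreover have "is_map01 b"
    unfolding b_def
  proof (rule is_map01_restrict)
    show "h ` I01 \<subseteq> I01"
      using assms(1) by (auto simp: h_def I01_def)
    show "mono_on I01 h"
      by (auto simp: mono_on_def h_def)
    show "continuous_on I01 h"
      unfolding h_def by (intro continuous_intros)
  qed
  moreover have "\<forall>x\<in>I01 - {y<..<m}. a x = b x"
    using assms(2) by (auto simp: a_def b_def h_def)
  ultimately show thesis
    using that by blast
qed

lemma is_map01_separated_by_images_iff:
  assumes "finite F" and maps: "\<forall>f\<in>F. is_map01 f"
  defines "U \<equiv> \<Union>f\<in>F. f ` I01"
  shows "(\<forall>a b. is_map01 a \<longrightarrow> is_map01 b \<longrightarrow> (\<forall>z\<in>U. a z = b z) \<longrightarrow> a = b) \<longleftrightarrow> U = I01"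
proof
  assume separates: "\<forall>a b. is_map01 a \<longrightarrow> is_map01 b \<longrightarrow> (\<forall>z\<in>U. a z = b z) \<longrightarrow> a = b"
  show "U = I01"
  proof (rule ccontr)
    assume "U \<noteq> I01"
    moreover have "U \<subseteq> I01"
      unfolding U_def using maps is_map01_mapsto by blast
    ultimately obtain y where "y \<in> I01" "y \<notin> U"
      by blast
    obtain m where "y < m" "m \<le> 1" and gap: "\<forall>f\<in>F. \<forall>t\<in>I01. f t \<notin> {y<..<m}"
      using is_map01_images_gap[OF assms(1) maps \<open>y \<in> I01\<close>] \<open>y \<notin> U\<close> unfolding U_def by blast
    obtain a b where "is_map01 a" "is_map01 b" "a \<noteq> b"
      and agree: "\<forall>x\<in>I01 - {y<..<m}. a x = b x"
      using is_map01_differ_only_on[OF \<open>y \<in> I01\<close> \<open>y < m\<close> \<open>m \<le> 1\<close>] by blast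
    have "\<forall>z\<in>U. a z = b z"
    proof
      fix z assume "z \<in> U"
      then obtain f t where "f \<in> F" "t \<in> I01" "z = f t"
        unfolding U_def by blast
      then have "z \<in> I01 - {y<..<m}"
        using maps gap is_map01_mapsto by blast
      then show "a z = b z"
        using agree by blast
    qed
    then show False
      using separates \<open>is_map01 a\<close> \<open>is_map01 b\<close> \<open>a \<noteq> b\<close> by blast
  qed
next
  assume "U = I01"
  then show "\<forall>a b. is_map01 a \<longrightarrow> is_map01 b \<longrightarrow> (\<forall>z\<in>U. a z = b z) \<longrightarrow> a = b"
    by (simp add: is_map01_eq_iff)
qed

lemma op_surjective_Pop_iff:
  assumes "fs \<in> Pop n"
  shows "op_surjective Pop Pcomp fs \<longleftrightarrow> (\<Union>f\<in>set fs. f ` I01) = I01"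
proof -
  have maps: "\<forall>f\<in>set fs. is_map01 f"
    using assms by (auto simp: Pop_def)
  have "Pcomp [a] [fs] = Pcomp [b] [fs] \<longleftrightarrow> (\<forall>z\<in>\<Union>f\<in>set fs. f ` I01. a z = b z)" for a b
    by (auto simp: Pcomp_unary comp01_eq_iff)
  then have "op_surjective Pop Pcomp fs \<longleftrightarrow> (\<forall>a b. is_map01 a \<longrightarrow> is_map01 b \<longrightarrow>
      (\<forall>z\<in>\<Union>f\<in>set fs. f ` I01. a z = b z) \<longrightarrow> a = b)"
    unfolding op_surjective_def ball_Pop_1 by simp
  also have "\<dots> \<longleftrightarrow> (\<Union>f\<in>set fs. f ` I01) = I01"
    using is_map01_separated_by_images_iff[OF finite_set maps] by simp
  finally show ?thesis .
qed

theorem mainTheorem3: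
  shows "(\<forall>g. [g] \<in> Pop 1 \<longrightarrow>
            (op_constant Pop Pcomp [g] \<longleftrightarrow> (\<exists>c. \<forall>t\<in>I01. g t = c)))
       \<and> (\<forall>n fs. fs \<in> Pop n \<longrightarrow>
            (op_surjective Pop Pcomp fs \<longleftrightarrow> (\<Union>f\<in>set fs. f ` I01) = I01))
       \<and> (\<forall>g. [g] \<in> Pop 1 \<longrightarrow>
            (op_constant Pop (rev_comp Pcomp) [g] \<longleftrightarrow> (\<exists>c. \<forall>t\<in>I01. g t = c)))
       \<and> (\<forall>n fs. fs \<in> Pop n \<longrightarrow>
            (op_surjective Pop (rev_comp Pcomp) fs \<longleftrightarrow> (\<Union>f\<in>set fs. f ` I01) = I01))"
  unfolding op_constant_rev_comp op_surjective_rev_comp Pop_1_iff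
  using op_constant_Pop_iff op_surjective_Pop_iff by blast

end
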